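(* Let $M\in(0,1)$ and $V_1,V_2\in(0,M-M^2)$ with $V_1\neq V_2$. (1) The equation $F_{M,V_1}(x)=F_{M,V_2}(x)$ has exactly one solution $x_c$ in $(0,1)$. (2) If $V_1<V_2$, then $F_{M,V_1}(x)<F_{M,V_2}(x)$ for all $x\in(0,x_c)$ and $F_{M,V_2}(x)<F_{M,V_1}(x)$ for all $x\in(x_c,1)$.
   Context: For $(M,V)$ with $M\in(0,1)$, $0<V<M-M^2$, $F_{M,V}$ is the distribution function of the Beta$(\alpha,\beta)$ law (density $x^{\alpha-1}(1-x)^{\beta-1}/B(\alpha,\beta)$ on $(0,1)$) with $\alpha=\frac{M(M-M^2-V)}{V}$, $\beta=\frac{(1-M)(M-M^2-V)}{V}$, i.e. the Beta law with mean $M$ and variance $V$. *)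

theory Defs
  imports "HOL-Analysis.Analysis"
begin

definition beta_density :: "real \<Rightarrow> real \<Rightarrow> real \<Rightarrow> real" where
  "beta_density a b t =
     (if 0 < t \<and> t < 1 then t powr (a - 1) * (1 - t) powr (b - 1) / Beta a b else 0)"

definition beta_cdf :: "real \<Rightarrow> real \<Rightarrow> real \<Rightarrow> real" where
  "beta_cdf a b x = (LINT t:{..x}|lborel. beta_density a b t)"

text \<open>Parameters of the Beta law with mean M and variance V.\<close>
definition beta_alpha :: "real \<Rightarrow> real \<Rightarrow> real" where
  "beta_alpha M V = M * (M - M\<^sup>2 - V) / V"

definition beta_beta :: "real \<Rightarrow> real \<Rightarrow> real" where
  "beta_beta M V = (1 - M) * (M - M\<^sup>2 - V) / V"

definition F_MV :: "real \<Rightarrow> real \<Rightarrow> real \<Rightarrow> real" where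
  "F_MV M V x = beta_cdf (beta_alpha M V) (beta_beta M V) x"

end

theory Submission
  imports Defs
begin

(* For a' < a and b' < b the densities of Beta(a,b) and Beta(a',b') differ by a positive factor
   times phi t = t^(a-a') (1-t)^(b-b') / B(a,b) - 1 / B(a',b'), a unimodal function that is
   negative at both ends of [0,1]. Since both densities integrate to 1, phi must become positive,
   so the density difference is negative, then positive, then negative. The difference of the
   distribution functions vanishes at 0 and 1, hence it decreases, increases and decreases again,
   and it crosses zero exactly once, from below. At fixed mean, a smaller variance gives larger
   parameters alpha and beta. *)

lemma Beta_real_pos: "0 < a \<Longrightarrow> 0 < b \<Longrightarrow> 0 < Beta (a::real) b"
  unfolding Beta_def by (simp add: Gamma_real_pos)

lemma beta_density_nonneg: "0 < a \<Longrightarrow> 0 < b \<Longrightarrow> 0 \<le> beta_density a b t"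
  unfolding beta_density_def using Beta_real_pos[of a b] by auto

lemma has_integral_beta_density:
  assumes "0 < a" "0 < b"
  shows "(beta_density a b has_integral 1) {0..1}"
proof -
  have "((\<lambda>t. t powr (a - 1) * (1 - t) powr (b - 1) / Beta a b) has_integral 1) {0..1}"
    using has_integral_divide[OF has_integral_Beta_real[OF assms], of "Beta a b"]
      Beta_real_pos[OF assms] by simp
  then show ?thesis
    by (rule has_integral_eq[rotated]) (auto simp: beta_density_def)
qed

lemma beta_cdf_eq_integral:
  assumes "0 < a" "0 < b" "0 \<le> x" "x \<le> 1"
  shows "beta_cdf a b x = integral {0..x} (beta_density a b)"
proof -
  let ?f = "beta_density a b"
  have restrict: "(\<lambda>t. if t \<in> {..x} then ?f t else 0) = (\<lambda>t. if t \<in> {0..x} then ?f t else 0)"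
    by (auto simp: beta_density_def)
  have "?f integrable_on {0..x}"
    by (rule integrable_on_subinterval[OF has_integral_integrable[OF has_integral_beta_density[OF assms(1,2)]]])
      (use assms in auto)
  then have "?f integrable_on {..x}"
    by (subst integrable_restrict_UNIV[symmetric], subst restrict, subst integrable_restrict_UNIV)
  then have "?f absolutely_integrable_on {..x}"
    using beta_density_nonneg[OF assms(1,2)] by (intro nonnegative_absolutely_integrable_1) auto
  moreover have "(\<lambda>t. indicator {..x} t *\<^sub>R ?f t) \<in> borel_measurable lborel"
    unfolding beta_density_def by measurable
  ultimately have "set_integrable lborel {..x} ?f"
    unfolding set_integrable_def by (simp add: integrable_completion)
  then have "beta_cdf a b x = integral {..x} ?f"
    unfolding beta_cdf_def by (rule set_borel_integral_eq_integral)
  also have "\<dots> = integral {0..x} ?f"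
    by (subst (1 2) integral_restrict_UNIV[symmetric]) (simp only: restrict)
  finally show ?thesis .
qed

lemma beta_cdf_0: "0 < a \<Longrightarrow> 0 < b \<Longrightarrow> beta_cdf a b 0 = 0"
  by (simp add: beta_cdf_eq_integral)

lemma beta_cdf_1:
  assumes "0 < a" "0 < b"
  shows "beta_cdf a b 1 = 1"
  using beta_cdf_eq_integral[OF assms, of 1] has_integral_beta_density[OF assms]
  by (simp add: integral_unique)

lemma continuous_on_beta_cdf:
  assumes "0 < a" "0 < b"
  shows "continuous_on {0..1} (beta_cdf a b)"
proof -
  have "continuous_on {0..1} (\<lambda>x. integral {0..x} (beta_density a b))"
    using has_integral_beta_density[OF assms] by (blast intro: indefinite_integral_continuous_1)
  then show ?thesis
    by (rule continuous_on_eq) (simp add: beta_cdf_eq_integral[OF assms])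
qed

lemma continuous_on_beta_density:
  assumes "0 < a" "0 < b"
  shows "continuous_on {0<..<1} (beta_density a b)"
proof -
  have "continuous_on {0<..<1} (\<lambda>t. t powr (a - 1) * (1 - t) powr (b - 1) / Beta a b)"
    using Beta_real_pos[OF assms] by (intro continuous_intros) auto
  then show ?thesis
    by (rule continuous_on_eq) (simp add: beta_density_def)
qed

lemma beta_cdf_has_real_derivative:
  assumes "0 < a" "0 < b" "0 < x" "x < 1"
  shows "(beta_cdf a b has_real_derivative beta_density a b x) (at x)"
proof -
  have "isCont (beta_density a b) x"
    using continuous_on_beta_density[OF assms(1,2)] assms(3,4) by (simp add: continuous_on_eq_continuous_at)
  moreover have "beta_density a b integrable_on {0..1}"
    using has_integral_beta_density[OF assms(1,2)] by blast
  ultimately have "((\<lambda>u. integral {0..u} (beta_density a b)) has_vector_derivative beta_density a b x)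
      (at x within {0..1})"
    using integral_has_vector_derivative_continuous_at[of "beta_density a b" 0 1 x "{}"] assms(3,4)
    by (simp add: continuous_at_imp_continuous_at_within)
  then have "((\<lambda>u. integral {0..u} (beta_density a b)) has_real_derivative beta_density a b x) (at x)"
    unfolding has_real_derivative_iff_has_vector_derivative
    using at_within_interior[of x "{0..1}"] assms(3,4) by simp
  then show ?thesis
    by (rule has_field_derivative_transform_within_open[of _ _ _ "{0<..<1}"])
      (use assms in \<open>auto simp: beta_cdf_eq_integral\<close>)
qed

lemma strict_mono_on_if_deriv_pos:
  fixes f f' :: "real \<Rightarrow> real"
  assumes "continuous_on {a..b} f"
    and "\<And>x. a < x \<Longrightarrow> x < b \<Longrightarrow> (f has_real_derivative f' x) (at x)"
    and "\<And>x. a < x \<Longrightarrow> x < b \<Longrightarrow> 0 < f' x"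
  shows "strict_mono_on {a..b} f"
proof (rule strict_mono_onI)
  fix x y assume "x \<in> {a..b}" "y \<in> {a..b}" "x < y"
  note xy = this
  show "f x < f y"
  proof (rule DERIV_pos_imp_increasing_open[OF \<open>x < y\<close>])
    fix z assume "x < z" "z < y"
    with xy have "a < z" "z < b" by auto
    with assms(2,3) show "\<exists>l. (f has_real_derivative l) (at z) \<and> 0 < l" by blast
  next
    show "continuous_on {x..y} f"
      using assms(1) by (rule continuous_on_subset) (use xy in auto)
  qed
qed

lemma strict_antimono_on_if_deriv_neg:
  fixes f f' :: "real \<Rightarrow> real"
  assumes "continuous_on {a..b} f"
    and "\<And>x. a < x \<Longrightarrow> x < b \<Longrightarrow> (f has_real_derivative f' x) (at x)"
    and "\<And>x. a < x \<Longrightarrow> x < b \<Longrightarrow> f' x < 0"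
  shows "strict_antimono_on {a..b} f"
proof (rule monotone_onI)
  fix x y assume "x \<in> {a..b}" "y \<in> {a..b}" "x < y"
  note xy = this
  show "f y < f x"
  proof (rule DERIV_neg_imp_decreasing_open[OF \<open>x < y\<close>])
    fix z assume "x < z" "z < y"
    with xy have "a < z" "z < b" by auto
    with assms(2,3) show "\<exists>l. (f has_real_derivative l) (at z) \<and> l < 0" by blast
  next
    show "continuous_on {x..y} f"
      using assms(1) by (rule continuous_on_subset) (use xy in auto)
  qed
qed

lemma has_real_derivative_powr_mult_powr_one_minus:
  fixes c d t :: real
  assumes "0 < t" "t < 1"
  shows "((\<lambda>t. t powr c * (1 - t) powr d) has_real_derivative
           t powr (c - 1) * (1 - t) powr (d - 1) * (c - (c + d) * t)) (at t)"
proof -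
  have "((\<lambda>t. t powr c * (1 - t) powr d) has_real_derivative
           c * t powr (c - 1) * (1 - t) powr d - d * t powr c * (1 - t) powr (d - 1)) (at t)"
    using assms by (auto intro!: derivative_eq_intros)
  moreover have "t powr c = t powr (c - 1) * t" "(1 - t) powr d = (1 - t) powr (d - 1) * (1 - t)"
    using assms by (simp_all add: powr_diff)
  ultimately show ?thesis
    by (simp only:) (simp add: algebra_simps)
qed

lemma continuous_on_powr_mult_powr_one_minus:
  fixes c d :: real
  assumes "0 < c" "0 < d"
  shows "continuous_on {0..1} (\<lambda>t. t powr c * (1 - t) powr d)"
  using assms by (intro continuous_on_mult continuous_on_powr' continuous_intros) auto

lemma strict_mono_on_powr_mult_powr_one_minus:
  fixes c d :: real
  assumes "0 < c" "0 < d"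
  shows "strict_mono_on {0..c / (c + d)} (\<lambda>t. t powr c * (1 - t) powr d)"
proof (rule strict_mono_on_if_deriv_pos
    [where f' = "\<lambda>x. x powr (c - 1) * (1 - x) powr (d - 1) * (c - (c + d) * x)"])
  have "c / (c + d) < 1" using assms by simp
  then show "continuous_on {0..c / (c + d)} (\<lambda>t. t powr c * (1 - t) powr d)"
    by (intro continuous_on_subset[OF continuous_on_powr_mult_powr_one_minus[OF assms]]) auto
  fix x assume x: "0 < x" "x < c / (c + d)"
  with \<open>c / (c + d) < 1\<close> show "((\<lambda>t. t powr c * (1 - t) powr d) has_real_derivative
      x powr (c - 1) * (1 - x) powr (d - 1) * (c - (c + d) * x)) (at x)"
    by (intro has_real_derivative_powr_mult_powr_one_minus) auto
  have "0 < c - (c + d) * x"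
    using x assms by (simp add: field_simps)
  with x \<open>c / (c + d) < 1\<close> show "0 < x powr (c - 1) * (1 - x) powr (d - 1) * (c - (c + d) * x)"
    by (intro mult_pos_pos) auto
qed

lemma strict_antimono_on_powr_mult_powr_one_minus:
  fixes c d :: real
  assumes "0 < c" "0 < d"
  shows "strict_antimono_on {c / (c + d)..1} (\<lambda>t. t powr c * (1 - t) powr d)"
proof (rule strict_antimono_on_if_deriv_neg
    [where f' = "\<lambda>x. x powr (c - 1) * (1 - x) powr (d - 1) * (c - (c + d) * x)"])
  have "0 < c / (c + d)" using assms by simp
  then show "continuous_on {c / (c + d)..1} (\<lambda>t. t powr c * (1 - t) powr d)"
    by (intro continuous_on_subset[OF continuous_on_powr_mult_powr_one_minus[OF assms]]) auto
  fix x assume x: "c / (c + d) < x" "x < 1"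
  with \<open>0 < c / (c + d)\<close> show "((\<lambda>t. t powr c * (1 - t) powr d) has_real_derivative
      x powr (c - 1) * (1 - x) powr (d - 1) * (c - (c + d) * x)) (at x)"
    by (intro has_real_derivative_powr_mult_powr_one_minus) auto
  have "c - (c + d) * x < 0"
    using x assms by (simp add: field_simps)
  with x \<open>0 < c / (c + d)\<close> show "x powr (c - 1) * (1 - x) powr (d - 1) * (c - (c + d) * x) < 0"
    by (intro mult_pos_neg mult_pos_pos) auto
qed

lemma unimodal_sign_pattern:
  fixes \<phi> :: "real \<Rightarrow> real"
  assumes cont: "continuous_on {0..1} \<phi>" and m: "0 < m" "m < 1"
    and up: "strict_mono_on {0..m} \<phi>" and down: "strict_antimono_on {m..1} \<phi>"
    and ends: "\<phi> 0 < 0" "\<phi> 1 < 0" and top: "0 < \<phi> m"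
  obtains p q where "0 < p" "p < q" "q < 1"
    "\<And>t. 0 < t \<Longrightarrow> t < p \<Longrightarrow> \<phi> t < 0"
    "\<And>t. p < t \<Longrightarrow> t < q \<Longrightarrow> 0 < \<phi> t"
    "\<And>t. q < t \<Longrightarrow> t < 1 \<Longrightarrow> \<phi> t < 0"
proof -
  obtain p where p: "0 \<le> p" "p \<le> m" "\<phi> p = 0"
    using IVT'[of \<phi> 0 0 m] ends top m continuous_on_subset[OF cont, of "{0..m}"] by auto
  obtain q where q: "m \<le> q" "q \<le> 1" "\<phi> q = 0"
    using IVT2'[of \<phi> 1 0 m] ends top m continuous_on_subset[OF cont, of "{m..1}"] by auto
  have "p \<noteq> 0" "p \<noteq> m" "q \<noteq> m" "q \<noteq> 1"
    using p q ends top by auto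
  with p q have pq: "0 < p" "p < m" "m < q" "q < 1"
    by linarith+
  show ?thesis
  proof (rule that)
    fix t assume "0 < t" "t < p"
    then show "\<phi> t < 0"
      using strict_mono_onD[OF up, of t p] p pq by simp
  next
    fix t assume t: "p < t" "t < q"
    show "0 < \<phi> t"
    proof (cases "t \<le> m")
      case True
      then show ?thesis using strict_mono_onD[OF up, of p t] p pq t by simp
    next
      case False
      then show ?thesis using monotone_onD[OF down, of t q] q t by simp
    qed
  next
    fix t assume "q < t" "t < 1"
    then show "\<phi> t < 0"
      using monotone_onD[OF down, of q t] q pq by simp
  qed (use pq in auto)
qed

lemma sign_change_if_down_up_down:
  fixes G :: "real \<Rightarrow> real"
  assumes pq: "0 < p" "p < q" "q < 1" and ends: "G 0 = 0" "G 1 = 0"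
    and down_left: "strict_antimono_on {0..p} G" and up: "strict_mono_on {p..q} G"
    and down_right: "strict_antimono_on {q..1} G"
    and cont: "continuous_on {p..q} G"
  shows "\<exists>c\<in>{0<..<1}. G c = 0 \<and> (\<forall>x\<in>{0<..<c}. G x < 0) \<and> (\<forall>x\<in>{c<..<1}. 0 < G x)"
proof -
  have neg: "G x < 0" if "0 < x" "x \<le> p" for x
    using monotone_onD[OF down_left, of 0 x] ends that by simp
  have pos: "0 < G x" if "q \<le> x" "x < 1" for x
    using monotone_onD[OF down_right, of x 1] ends that pq by simp
  obtain c where c: "p \<le> c" "c \<le> q" "G c = 0"
    using IVT'[of G p 0 q] neg[of p] pos[of q] pq cont by auto
  have "c \<noteq> p" "c \<noteq> q"
    using neg[of p] pos[of q] c pq by auto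
  with c have c_strict: "p < c" "c < q"
    by linarith+
  show ?thesis
  proof (intro bexI conjI ballI)
    fix x assume x: "x \<in> {0<..<c}"
    show "G x < 0"
    proof (cases "x \<le> p")
      case True
      with x show ?thesis by (intro neg) auto
    next
      case False
      with x c_strict show ?thesis using strict_mono_onD[OF up, of x c] c by simp
    qed
  next
    fix x assume x: "x \<in> {c<..<1}"
    show "0 < G x"
    proof (cases "q \<le> x")
      case True
      with x show ?thesis by (intro pos) auto
    next
      case False
      with x c_strict show ?thesis using strict_mono_onD[OF up, of c x] c by simp
    qed
  qed (use c c_strict pq in auto)
qed

lemma sign_change_if_deriv_unimodal_factor:
  fixes G w \<phi> :: "real \<Rightarrow> real"
  assumes G: "continuous_on {0..1} G" "G 0 = 0" "G 1 = 0"
    and G': "\<And>x. 0 < x \<Longrightarrow> x < 1 \<Longrightarrow> (G has_real_derivative w x * \<phi> x) (at x)"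
    and w: "\<And>x. 0 < x \<Longrightarrow> x < 1 \<Longrightarrow> 0 < w x"
    and \<phi>: "continuous_on {0..1} \<phi>" "0 < m" "m < 1"
      "strict_mono_on {0..m} \<phi>" "strict_antimono_on {m..1} \<phi>" "\<phi> 0 < 0" "\<phi> 1 < 0"
  shows "\<exists>c\<in>{0<..<1}. G c = 0 \<and> (\<forall>x\<in>{0<..<c}. G x < 0) \<and> (\<forall>x\<in>{c<..<1}. 0 < G x)"
proof -
  have G_down: "strict_antimono_on {s..t} G"
    if st: "0 \<le> s" "t \<le> 1" and neg: "\<And>x. s < x \<Longrightarrow> x < t \<Longrightarrow> \<phi> x < 0" for s t
  proof (rule strict_antimono_on_if_deriv_neg[where f' = "\<lambda>x. w x * \<phi> x"])
    show "continuous_on {s..t} G"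
      using G(1) by (rule continuous_on_subset) (use st in auto)
    fix x assume "s < x" "x < t"
    with st show "(G has_real_derivative w x * \<phi> x) (at x)" by (intro G') auto
    from \<open>s < x\<close> \<open>x < t\<close> st show "w x * \<phi> x < 0" by (intro mult_pos_neg w neg) auto
  qed
  have G_up: "strict_mono_on {s..t} G"
    if st: "0 \<le> s" "t \<le> 1" and pos: "\<And>x. s < x \<Longrightarrow> x < t \<Longrightarrow> 0 < \<phi> x" for s t
  proof (rule strict_mono_on_if_deriv_pos[where f' = "\<lambda>x. w x * \<phi> x"])
    show "continuous_on {s..t} G"
      using G(1) by (rule continuous_on_subset) (use st in auto)
    fix x assume "s < x" "x < t"
    with st show "(G has_real_derivative w x * \<phi> x) (at x)" by (intro G') auto
    from \<open>s < x\<close> \<open>x < t\<close> st show "0 < w x * \<phi> x" by (intro mult_pos_pos w pos) auto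
  qed
  have top: "0 < \<phi> m" \<comment> \<open>otherwise G would decrease strictly from G 0 = 0 to G 1 = 0\<close>
  proof (rule ccontr)
    assume "\<not> 0 < \<phi> m"
    have neg: "\<phi> x < 0" if "0 \<le> x" "x \<le> 1" "x \<noteq> m" for x
    proof (cases "x < m")
      case True
      then show ?thesis using strict_mono_onD[OF \<phi>(4), of x m] that \<open>\<not> 0 < \<phi> m\<close> by simp
    next
      case False
      then show ?thesis using monotone_onD[OF \<phi>(5), of m x] that \<open>\<not> 0 < \<phi> m\<close> by simp
    qed
    have "G m < G 0"
      using monotone_onD[OF G_down[of 0 m]] neg \<phi>(2,3) by simp
    moreover have "G 1 < G m"
      using monotone_onD[OF G_down[of m 1]] neg \<phi>(2,3) by simp
    ultimately show False
      using G(2,3) by simp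
  qed
  obtain p q where pq: "0 < p" "p < q" "q < 1"
    and signs: "\<And>t. 0 < t \<Longrightarrow> t < p \<Longrightarrow> \<phi> t < 0" "\<And>t. p < t \<Longrightarrow> t < q \<Longrightarrow> 0 < \<phi> t"
      "\<And>t. q < t \<Longrightarrow> t < 1 \<Longrightarrow> \<phi> t < 0"
    using unimodal_sign_pattern[OF \<phi> top] by blast
  show ?thesis
  proof (rule sign_change_if_down_up_down[OF pq G(2,3)])
    show "strict_antimono_on {0..p} G"
      using pq by (intro G_down signs(1)) auto
    show "strict_mono_on {p..q} G"
      using pq by (intro G_up signs(2)) auto
    show "strict_antimono_on {q..1} G"
      using pq by (intro G_down signs(3)) auto
    show "continuous_on {p..q} G"
      using G(1) by (rule continuous_on_subset) (use pq in auto)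
  qed
qed

lemma beta_density_diff_factor:
  assumes "0 < t" "t < 1"
  shows "beta_density a b t - beta_density a' b' t =
    t powr (a' - 1) * (1 - t) powr (b' - 1) *
      (t powr (a - a') * (1 - t) powr (b - b') / Beta a b - 1 / Beta a' b')"
proof -
  have "t powr (a - 1) = t powr (a' - 1) * t powr (a - a')"
    "(1 - t) powr (b - 1) = (1 - t) powr (b' - 1) * (1 - t) powr (b - b')"
    by (simp_all add: powr_add[symmetric])
  with assms show ?thesis
    by (simp add: beta_density_def right_diff_distrib)
qed

lemma beta_cdf_sign_change:
  assumes "0 < a'" "a' < a" "0 < b'" "b' < b"
  shows "\<exists>c\<in>{0<..<1}. beta_cdf a b c = beta_cdf a' b' c \<and>
    (\<forall>x\<in>{0<..<c}. beta_cdf a b x < beta_cdf a' b' x) \<and>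
    (\<forall>x\<in>{c<..<1}. beta_cdf a' b' x < beta_cdf a b x)"
proof -
  have pos: "0 < a" "0 < b" "0 < a - a'" "0 < b - b'" "0 < Beta a b" "0 < Beta a' b'"
    using assms Beta_real_pos[of a b] Beta_real_pos[of a' b'] by auto
  define \<psi> where "\<psi> t = t powr (a - a') * (1 - t) powr (b - b')" for t
  define m where "m = (a - a') / ((a - a') + (b - b'))"
  let ?G = "\<lambda>x. beta_cdf a b x - beta_cdf a' b' x"
  let ?w = "\<lambda>t. t powr (a' - 1) * (1 - t) powr (b' - 1)"
  let ?\<phi> = "\<lambda>t. \<psi> t / Beta a b - 1 / Beta a' b'"
  have "\<exists>c\<in>{0<..<1}. ?G c = 0 \<and> (\<forall>x\<in>{0<..<c}. ?G x < 0) \<and> (\<forall>x\<in>{c<..<1}. 0 < ?G x)"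
  proof (rule sign_change_if_deriv_unimodal_factor[where w = ?w and \<phi> = ?\<phi> and m = m])
    show "continuous_on {0..1} ?G"
      using pos assms by (intro continuous_on_diff continuous_on_beta_cdf) auto
    show "?G 0 = 0" "?G 1 = 0"
      using pos assms by (simp_all add: beta_cdf_0 beta_cdf_1)
    fix x :: real assume x: "0 < x" "x < 1"
    show "(?G has_real_derivative ?w x * ?\<phi> x) (at x)"
      using DERIV_diff[OF beta_cdf_has_real_derivative[of a b x] beta_cdf_has_real_derivative[of a' b' x]]
        beta_density_diff_factor[OF x, of a b a' b'] pos assms x
      by (simp add: \<psi>_def)
    show "0 < ?w x"
      using x by simp
  next
    have "continuous_on {0..1} \<psi>"
      unfolding \<psi>_def by (rule continuous_on_powr_mult_powr_one_minus[OF pos(3,4)])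
    with pos show "continuous_on {0..1} ?\<phi>"
      by (intro continuous_intros) auto
    show "0 < m" "m < 1"
      using pos by (simp_all add: m_def)
    show "strict_mono_on {0..m} ?\<phi>"
    proof (rule strict_mono_onI)
      fix s t assume "s \<in> {0..m}" "t \<in> {0..m}" "s < t"
      then have "\<psi> s < \<psi> t"
        unfolding \<psi>_def m_def by (rule strict_mono_onD[OF strict_mono_on_powr_mult_powr_one_minus[OF pos(3,4)]])
      then show "?\<phi> s < ?\<phi> t"
        using pos by (simp add: divide_strict_right_mono)
    qed
    show "strict_antimono_on {m..1} ?\<phi>"
    proof (rule monotone_onI)
      fix s t assume "s \<in> {m..1}" "t \<in> {m..1}" "s < t"
      then have "\<psi> t < \<psi> s"
        unfolding \<psi>_def m_def
        using monotone_onD[OF strict_antimono_on_powr_mult_powr_one_minus[OF pos(3,4)]] by simp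
      then show "?\<phi> t < ?\<phi> s"
        using pos by (simp add: divide_strict_right_mono)
    qed
    show "?\<phi> 0 < 0" "?\<phi> 1 < 0"
      using pos by (simp_all add: \<psi>_def)
  qed
  then show ?thesis
    by simp
qed

lemma beta_params_strict_antimono:
  assumes "0 < M" "M < 1" "0 < V" "V < V'" "V' < M - M\<^sup>2"
  shows "0 < beta_alpha M V'" "beta_alpha M V' < beta_alpha M V"
    "0 < beta_beta M V'" "beta_beta M V' < beta_beta M V"
proof -
  have scale: "beta_alpha M W = M * ((M - M\<^sup>2) / W - 1)" "beta_beta M W = (1 - M) * ((M - M\<^sup>2) / W - 1)"
    if "0 < W" for W
    using that by (simp_all add: beta_alpha_def beta_beta_def field_simps)
  have "1 < (M - M\<^sup>2) / V'" "(M - M\<^sup>2) / V' < (M - M\<^sup>2) / V"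
    using assms by (simp_all add: divide_strict_left_mono)
  then show "0 < beta_alpha M V'" "beta_alpha M V' < beta_alpha M V"
    "0 < beta_beta M V'" "beta_beta M V' < beta_beta M V"
    using assms by (simp_all add: scale)
qed

lemma crossing_point_unique:
  fixes f g :: "real \<Rightarrow> real"
  assumes "\<forall>x\<in>{0<..<c}. f x < g x" "f c = g c" "\<forall>x\<in>{c<..<1}. g x < f x" "x \<in> {0<..<1}"
  shows "f x = g x \<longleftrightarrow> x = c"
proof (cases x c rule: linorder_cases)
  case less
  with assms(1,4) have "f x < g x" by simp
  with less show ?thesis by simp
next
  case greater
  with assms(3,4) have "g x < f x" by simp
  with greater show ?thesis by simp
qed (use assms in simp)

theorem proposition5:
  fixes M V1 V2 :: real
  assumes "0 < M" "M < 1"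
    and "0 < V1" "V1 < M - M\<^sup>2"
    and "0 < V2" "V2 < M - M\<^sup>2"
    and "V1 \<noteq> V2"
  shows "(\<exists>!xc. xc \<in> {0<..<1} \<and> F_MV M V1 xc = F_MV M V2 xc) \<and>
         (V1 < V2 \<longrightarrow>
           (\<forall>xc. xc \<in> {0<..<1} \<and> F_MV M V1 xc = F_MV M V2 xc \<longrightarrow>
             (\<forall>x\<in>{0<..<xc}. F_MV M V1 x < F_MV M V2 x) \<and>
             (\<forall>x\<in>{xc<..<1}. F_MV M V2 x < F_MV M V1 x)))"
proof -
  have crossing: "\<exists>c\<in>{0<..<1}. F_MV M V c = F_MV M V' c \<and>
      (\<forall>x\<in>{0<..<c}. F_MV M V x < F_MV M V' x) \<and> (\<forall>x\<in>{c<..<1}. F_MV M V' x < F_MV M V x)"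
    if "0 < V" "V < V'" "V' < M - M\<^sup>2" for V V'
    unfolding F_MV_def
    using beta_params_strict_antimono[OF assms(1,2) that] by (intro beta_cdf_sign_change)
  consider "V1 < V2" | "V2 < V1"
    using assms(7) by linarith
  then show ?thesis
  proof cases
    case 1
    then obtain c where "c \<in> {0<..<1}" "F_MV M V1 c = F_MV M V2 c"
      "\<forall>x\<in>{0<..<c}. F_MV M V1 x < F_MV M V2 x" "\<forall>x\<in>{c<..<1}. F_MV M V2 x < F_MV M V1 x"
      using crossing assms by blast
    with crossing_point_unique[of c "F_MV M V1" "F_MV M V2"] show ?thesis
      by blast
  next
    case 2
    then obtain c where "c \<in> {0<..<1}" "F_MV M V2 c = F_MV M V1 c"
      "\<forall>x\<in>{0<..<c}. F_MV M V2 x < F_MV M V1 x" "\<forall>x\<in>{c<..<1}. F_MV M V1 x < F_MV M V2 x"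
      using crossing assms by blast
    with crossing_point_unique[of c "F_MV M V2" "F_MV M V1"] 2 show ?thesis
      by (metis less_asym)
  qed
qed

end
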